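(* Let $\mathcal{L}$ be differentiable and let (A4)–(A5) (see context) hold with some $q>1$. Fix $\theta\in\mathbb{R}^d$ and $p\in(0,1)$, let $\widetilde G(\theta)\sim\mathcal{D}_{\mathcal I}(\theta)$ be an uncorrupted gradient sample, $\tau_\theta=Q_p(\|\widetilde G(\theta)\|)$, $\alpha_\theta=\min(1,\tau_\theta/\|\widetilde G(\theta)\|)$ and $\overline\alpha_\theta=\mathbb{E}[\alpha_\theta\mid\theta]$. Then $$\big\|\mathbb{E}[\alpha_\theta\widetilde G(\theta)]-\overline\alpha_\theta\nabla\mathcal{L}(\theta)\big\|\le(1-p)^{1-1/q}\big(A_q\|\theta-\theta^\star\|+B_q\big),$$ $$\tau_\theta\le\|\nabla\mathcal{L}(\theta)\|+Q_p(\|\varepsilon_\theta\|)\le\|\nabla\mathcal{L}(\theta)\|+(1-p)^{-1/q}\big(A_q\|\theta-\theta^\star\|+B_q\big).$$ If moreover $q\ge2$, then $$\mathbb{E}\big\|\alpha_\theta\widetilde G(\theta)-\mathbb{E}[\alpha_\theta\widetilde G(\theta)]\big\|^2\le\big(A_q\|\theta-\theta^\star\|+B_q\big)^2+5(1-p)\tau_\theta^2.$$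
   Context: (A4) For all $\theta$, uncorrupted gradient samples satisfy $\widetilde G(\theta)=\nabla\mathcal{L}(\theta)+\varepsilon_\theta$, with $\mathbb{E}[\varepsilon_\theta\mid\theta]=0$ and $\varepsilon_\theta$ distributed as $\delta\nu_{\theta,1}+(1-\delta)\nu_{\theta,2}$, $\delta>0$, where $\nu_{\theta,1}$ has a Lebesgue density $h_\theta$ with $\inf_{\|\omega\|\le R}h_\theta(\omega)>\varkappa(R)>0$ for all $R>0$, $\varkappa$ independent of $\theta$. (A5) For all $\theta$: $\mathbb{E}[\|\varepsilon_\theta\|^q\mid\theta]^{1/q}\le A_q\|\theta-\theta^\star\|+B_q$ with $A_q,B_q>0$, where $\theta^\star\in\mathbb{R}^d$ is a fixed reference point (the minimizer of $\mathcal{L}$). $Q_p(X)$ denotes the $p$-quantile of a real random variable $X$. All expectations are conditional on the fixed $\theta$. *)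

theory Defs
  imports "HOL-Probability.Probability"
begin

definition quantile :: "'a measure \<Rightarrow> ('a \<Rightarrow> real) \<Rightarrow> real \<Rightarrow> real" where
  "quantile M X p = Inf {t::real. measure M {\<omega> \<in> space M. X \<omega> \<le> t} \<ge> p}"

text \<open>Clipping factor alpha = min(1, tau / norm g), with the convention min(1, tau/0) = 1.\<close>
definition clip_factor :: "real \<Rightarrow> 'v::real_normed_vector \<Rightarrow> real" where
  "clip_factor \<tau> g = (if norm g \<le> \<tau> then 1 else \<tau> / norm g)"

end

theory Submission
  imports Defs
begin

(*
  Clipping at radius \<tau> is the metric projection onto the ball cball 0 \<tau>. By right continuity
  of the distribution function, Q_p(X) \<le> t iff P(X \<le> t) \<ge> p; hence the clipping event
  {norm G > \<tau>} has probability at most 1 - p, and Markov's inequality for norm \<epsilon>^q bounds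
  Q_p(norm \<epsilon>), while norm G \<le> norm (\<nabla>L) + norm \<epsilon> transfers quantile bounds.
  As \<epsilon> has mean zero, the bias of the clipped mean is E[(\<alpha> - 1) \<epsilon>], which lives on the
  clipping event; Hoelder's inequality with the q-th moment bound gives (1-p)^(1-1/q) C.
  Projections onto convex sets are 1-Lipschitz, so the clipped gradient stays within norm \<epsilon>
  of the clipped true gradient.
*)

definition clip :: "real \<Rightarrow> 'a::real_normed_vector \<Rightarrow> 'a" where
  "clip \<tau> x = clip_factor \<tau> x *\<^sub>R x"

lemma clip_factor_nonneg: "0 \<le> \<tau> \<Longrightarrow> 0 \<le> clip_factor \<tau> x"
  by (simp add: clip_factor_def)

lemma clip_factor_le_one: "0 \<le> \<tau> \<Longrightarrow> clip_factor \<tau> x \<le> 1"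
  by (simp add: clip_factor_def divide_le_eq)

lemma norm_clip_le: "0 \<le> \<tau> \<Longrightarrow> norm (clip \<tau> x) \<le> \<tau>"
  by (auto simp: clip_def clip_factor_def)

lemma clip_eq_closest_point:
  fixes x :: "'a::euclidean_space"
  assumes "0 \<le> \<tau>"
  shows "clip \<tau> x = closest_point (cball 0 \<tau>) x"
proof (rule closest_point_unique)
  show "clip \<tau> x \<in> cball 0 \<tau>"
    using norm_clip_le[OF assms] by simp
  show "\<forall>z\<in>cball 0 \<tau>. dist x (clip \<tau> x) \<le> dist x z"
  proof
    fix z :: 'a assume z: "z \<in> cball 0 \<tau>"
    show "dist x (clip \<tau> x) \<le> dist x z"
    proof (cases "norm x \<le> \<tau>")
      case True then show ?thesis by (simp add: clip_def clip_factor_def)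
    next
      case False
      then have "x - clip \<tau> x = (1 - \<tau> / norm x) *\<^sub>R x"
        by (simp add: clip_def clip_factor_def algebra_simps)
      moreover have "0 \<le> 1 - \<tau> / norm x"
        using False assms by (simp add: divide_le_eq)
      ultimately have "dist x (clip \<tau> x) = (1 - \<tau> / norm x) * norm x"
        by (simp add: dist_norm)
      also have "\<dots> = norm x - \<tau>"
        using False assms by (auto simp: field_simps)
      also have "\<dots> \<le> norm x - norm z" using z by simp
      also have "\<dots> \<le> dist x z" by (simp add: dist_norm norm_triangle_ineq2)
      finally show ?thesis .
    qed
  qed
qed auto

lemma norm_clip_diff_le:
  fixes x y :: "'a::euclidean_space"
  assumes "0 \<le> \<tau>"
  shows "norm (clip \<tau> x - clip \<tau> y) \<le> norm (x - y)"
  using closest_point_lipschitz[of "cball (0::'a) \<tau>" x y] assms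
  by (simp add: clip_eq_closest_point dist_norm)

lemma Young_inequality_scaled:
  fixes y C r q :: real
  assumes "0 \<le> y" "0 < C" "0 < r" "1 < q"
  shows "y \<le> C * r powr (1 - 1/q) * (y powr q / (q * C powr q) + (1 - 1/q) / r)"
proof -
  define a where "a = 1 - 1/q"
  have q': "1 < q/(q-1)" and conj: "1/q + 1/(q/(q-1)) = 1"
    using assms by (simp_all add: field_simps)
  have "(y/C) * r powr (-a) \<le> (y/C) powr q / q + (r powr (-a)) powr (q/(q-1)) / (q/(q-1))"
    by (rule Youngs_inequality[OF assms(4) q' conj]) (use assms in auto)
  also have "(r powr (-a)) powr (q/(q-1)) = r powr (-1)"
    unfolding powr_powr using assms by (simp add: a_def field_simps)
  also have "\<dots> = 1 / r"
    using assms by (simp add: powr_minus_divide)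
  also have "1 / r / (q/(q-1)) = a / r"
    using assms by (simp add: a_def field_simps)
  also have "(y/C) powr q = y powr q / C powr q"
    using assms by (simp add: powr_divide)
  finally have "(y/C) * r powr (-a) \<le> y powr q / (q * C powr q) + a / r"
    by (simp add: ac_simps)
  then have "C * r powr a * ((y/C) * r powr (-a)) \<le> C * r powr a * (y powr q / (q * C powr q) + a / r)"
    using assms by (intro mult_left_mono) auto
  moreover have "C * r powr a * ((y/C) * r powr (-a)) = y"
    using assms by (simp add: powr_minus field_simps)
  ultimately show ?thesis by (simp add: a_def)
qed

lemma power2_le_Young_powr:
  fixes y C q :: real
  assumes "0 \<le> y" "0 < C" "2 \<le> q"
  shows "y\<^sup>2 \<le> C\<^sup>2 * ((2/q) * (y powr q / C powr q) + (1 - 2/q))"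
proof (cases "y = 0")
  case True
  then show ?thesis using assms by simp
next
  case False
  have "(y powr q / C powr q) powr (2/q) * 1 powr (1 - 2/q)
          \<le> (2/q) * (y powr q / C powr q) + (1 - 2/q) * 1"
    by (rule Youngs_inequality_0) (use assms False in auto)
  moreover have "(y powr q / C powr q) powr (2/q) = (y / C) powr 2"
    using assms by (simp add: powr_divide[symmetric] powr_powr)
  moreover have "(y / C) powr 2 = y\<^sup>2 / C\<^sup>2"
    using assms by (simp add: power_divide)
  ultimately show ?thesis using assms by (simp add: field_simps)
qed

lemma integrable_integral_le_of_nn_integral_le:
  assumes f: "f \<in> borel_measurable M" "\<And>x. 0 \<le> f x"
    and le: "(\<integral>\<^sup>+x. ennreal (f x) \<partial>M) \<le> ennreal c" and c: "0 \<le> c"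
  shows "integrable M f" and "integral\<^sup>L M f \<le> c"
proof -
  show int: "integrable M f"
    using le f by (intro integrableI_bounded) (auto simp: le_less_trans)
  have "ennreal (integral\<^sup>L M f) \<le> ennreal c"
    using le by (subst nn_integral_eq_integral[OF int, symmetric]) (use f in auto)
  then show "integral\<^sup>L M f \<le> c" using c by simp
qed

context prob_space
begin

lemma cdf_distr_eq:
  assumes "random_variable borel X"
  shows "cdf (distr M borel X) t = prob {\<omega> \<in> space M. X \<omega> \<le> t}"
  using assms by (simp add: cdf_def measure_distr vimage_def Int_def conj_commute)

lemma quantile_le_iff:
  assumes X: "random_variable borel X" and p: "0 < p" "p < 1"
  shows "quantile M X p \<le> t \<longleftrightarrow> p \<le> prob {\<omega> \<in> space M. X \<omega> \<le> t}"
proof -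
  interpret D: real_distribution "distr M borel X" using X by simp
  define F where "F = cdf (distr M borel X)"
  define S where "S = {t. p \<le> F t}"
  have Q: "quantile M X p = Inf S"
    by (simp add: quantile_def S_def F_def cdf_distr_eq[OF X])
  have "\<forall>\<^sub>F t in at_top. p < F t"
    using order_tendstoD(1)[OF D.cdf_lim_at_top_prob p(2)] by (simp add: F_def)
  then obtain s where "s \<in> S"
    by (auto simp: S_def eventually_at_top_linorder intro: less_imp_le)
  then have S_ne: "S \<noteq> {}" by auto
  have "\<forall>\<^sub>F t in at_bot. F t < p"
    using order_tendstoD(2)[OF D.cdf_lim_at_bot p(1)] by (simp add: F_def)
  then obtain b where b: "\<And>t. t \<le> b \<Longrightarrow> F t < p"
    by (auto simp: eventually_at_bot_linorder)
  have S_bdd: "bdd_below S"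
  proof (rule bdd_belowI)
    fix s assume "s \<in> S"
    then show "b \<le> s" using b[of s] by (cases "s \<le> b") (auto simp: S_def)
  qed
  have S_up: "t \<in> S" if "s \<in> S" "s \<le> t" for s t
    using that D.cdf_nondecreasing by (force simp: S_def F_def)
  \<comment> \<open>right continuity of the distribution function makes the infimum a minimum\<close>
  have "p \<le> F (Inf S)"
  proof (rule tendsto_lowerbound)
    show "(F \<longlongrightarrow> F (Inf S)) (at_right (Inf S))"
      using D.cdf_is_right_cont by (simp add: F_def continuous_within)
    show "\<forall>\<^sub>F t in at_right (Inf S). p \<le> F t"
    proof (rule eventually_at_rightI)
      fix t assume "t \<in> {Inf S<..<Inf S + 1}"
      then obtain s where "s \<in> S" "s < t" using cInf_lessD[OF S_ne] by auto
      then show "p \<le> F t" using S_up by (auto simp: S_def)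
    qed simp
  qed simp
  then have "Inf S \<in> S" by (simp add: S_def)
  then have "Inf S \<le> t \<longleftrightarrow> t \<in> S"
    using S_up cInf_lower[OF _ S_bdd] by blast
  then show ?thesis by (simp add: Q S_def F_def cdf_distr_eq[OF X])
qed

lemma prob_le_quantile:
  assumes "random_variable borel X" "0 < p" "p < 1"
  shows "p \<le> prob {\<omega> \<in> space M. X \<omega> \<le> quantile M X p}"
  using quantile_le_iff[OF assms, of "quantile M X p"] by simp

lemma prob_quantile_less_le:
  assumes X: "random_variable borel X" and p: "0 < p" "p < 1"
  shows "prob {\<omega> \<in> space M. quantile M X p < X \<omega>} \<le> 1 - p"
proof -
  have "{\<omega> \<in> space M. quantile M X p < X \<omega>}
          = space M - {\<omega> \<in> space M. X \<omega> \<le> quantile M X p}"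
    by auto
  then show ?thesis
    using prob_le_quantile[OF assms] X by (simp add: prob_compl)
qed

lemma quantile_nonneg:
  assumes X: "random_variable borel X" and p: "0 < p" "p < 1"
    and nonneg: "\<And>\<omega>. \<omega> \<in> space M \<Longrightarrow> 0 \<le> X \<omega>"
  shows "0 \<le> quantile M X p"
proof (rule ccontr)
  assume "\<not> 0 \<le> quantile M X p"
  then have empty: "{\<omega> \<in> space M. X \<omega> \<le> quantile M X p} = {}"
    using nonneg by force
  show False using prob_le_quantile[OF X p] p unfolding empty by simp
qed

lemma quantile_le_add:
  assumes X: "random_variable borel X" and Y: "random_variable borel Y" and p: "0 < p" "p < 1"
    and le: "\<And>\<omega>. \<omega> \<in> space M \<Longrightarrow> X \<omega> \<le> c + Y \<omega>"
  shows "quantile M X p \<le> c + quantile M Y p"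
proof -
  have "{\<omega> \<in> space M. Y \<omega> \<le> quantile M Y p} \<subseteq> {\<omega> \<in> space M. X \<omega> \<le> c + quantile M Y p}"
    using le by force
  then have "prob {\<omega> \<in> space M. Y \<omega> \<le> quantile M Y p}
               \<le> prob {\<omega> \<in> space M. X \<omega> \<le> c + quantile M Y p}"
    using X Y by (intro finite_measure_mono) measurable
  then show ?thesis
    using prob_le_quantile[OF Y p] quantile_le_iff[OF X p] by simp
qed

lemma integral_indicator_mult_le_moment:
  assumes Y: "Y \<in> borel_measurable M" "\<And>\<omega>. 0 \<le> Y \<omega>"
    and mom: "integrable M (\<lambda>\<omega>. Y \<omega> powr q)" "(\<integral>\<omega>. Y \<omega> powr q \<partial>M) \<le> C powr q"
    and qC: "1 < q" "0 < C"
    and S: "S \<in> sets M" "prob S \<le> r" "0 < r"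
  shows "(\<integral>\<omega>. indicator S \<omega> * Y \<omega> \<partial>M) \<le> r powr (1 - 1/q) * C"
proof -
  define a where "a = 1 - 1/q"
  define c1 where "c1 = C * r powr a / (q * C powr q)"
  define c2 where "c2 = C * r powr a * a / r"
  define R where "R = (\<lambda>\<omega>. c1 * Y \<omega> powr q + c2 * indicator S \<omega>)"
  have c: "0 \<le> c1" "0 \<le> c2" "0 \<le> a"
    using qC S by (simp_all add: c1_def c2_def a_def)
  have ind: "integrable M (\<lambda>\<omega>. indicator S \<omega> :: real)"
    by (rule integrable_const_bound[where B=1]) (use S in auto)
  have R_int: "integrable M R"
    unfolding R_def using mom ind by simp
  \<comment> \<open>Hoelder's inequality, obtained by integrating Young's inequality\<close>
  have le_R: "indicator S \<omega> * Y \<omega> \<le> R \<omega>" for \<omega>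
  proof (cases "\<omega> \<in> S")
    case True
    have "C * r powr a * (Y \<omega> powr q / (q * C powr q) + a / r) = c1 * Y \<omega> powr q + c2"
      by (simp add: c1_def c2_def distrib_left)
    then show ?thesis
      using Young_inequality_scaled[OF Y(2) qC(2) S(3) qC(1), of \<omega>] True
      by (simp add: R_def a_def)
  qed (use Y c in \<open>simp add: R_def\<close>)
  have int: "integrable M (\<lambda>\<omega>. indicator S \<omega> * Y \<omega>)"
    by (rule Bochner_Integration.integrable_bound[OF R_int])
       (use Y S le_R in \<open>auto intro!: AE_I2 order_trans[OF _ abs_ge_self]\<close>)
  have "(\<integral>\<omega>. indicator S \<omega> * Y \<omega> \<partial>M) \<le> integral\<^sup>L M R"
    by (rule integral_mono[OF int R_int le_R])
  also have "\<dots> = c1 * (\<integral>\<omega>. Y \<omega> powr q \<partial>M) + c2 * prob S"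
    unfolding R_def using mom ind S by simp
  also have "\<dots> \<le> c1 * C powr q + c2 * r"
    using mom S c by (intro add_mono mult_left_mono) auto
  also have "\<dots> = r powr a * C * (1/q + a)"
    using qC S by (simp add: c1_def c2_def field_simps)
  finally show ?thesis by (simp add: a_def)
qed

lemma integral_power2_le_moment:
  fixes q C :: real
  assumes Y: "Y \<in> borel_measurable M" "\<And>\<omega>. 0 \<le> Y \<omega>"
    and mom: "integrable M (\<lambda>\<omega>. Y \<omega> powr q)" "(\<integral>\<omega>. Y \<omega> powr q \<partial>M) \<le> C powr q"
    and qC: "2 \<le> q" "0 < C"
  shows "integrable M (\<lambda>\<omega>. (Y \<omega>)\<^sup>2)" and "(\<integral>\<omega>. (Y \<omega>)\<^sup>2 \<partial>M) \<le> C\<^sup>2"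
proof -
  define R where "R = (\<lambda>\<omega>. C\<^sup>2 * ((2/q) * (Y \<omega> powr q / C powr q) + (1 - 2/q)))"
  have R_int: "integrable M R"
    unfolding R_def using mom by simp
  have le_R: "(Y \<omega>)\<^sup>2 \<le> R \<omega>" for \<omega>
    unfolding R_def using power2_le_Young_powr[OF Y(2) qC(2) qC(1)] .
  show int: "integrable M (\<lambda>\<omega>. (Y \<omega>)\<^sup>2)"
    by (rule Bochner_Integration.integrable_bound[OF R_int])
       (use Y le_R in \<open>auto intro!: AE_I2 order_trans[OF _ abs_ge_self]\<close>)
  have "(\<integral>\<omega>. (Y \<omega>)\<^sup>2 \<partial>M) \<le> integral\<^sup>L M R"
    by (rule integral_mono[OF int R_int le_R])
  also have "\<dots> = C\<^sup>2 * ((2/q) * ((\<integral>\<omega>. Y \<omega> powr q \<partial>M) / C powr q) + (1 - 2/q))"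
    unfolding R_def using mom by (simp add: prob_space)
  also have "\<dots> \<le> C\<^sup>2 * ((2/q) * (C powr q / C powr q) + (1 - 2/q))"
    using mom qC by (intro mult_left_mono add_right_mono divide_right_mono) auto
  finally show "(\<integral>\<omega>. (Y \<omega>)\<^sup>2 \<partial>M) \<le> C\<^sup>2"
    using qC by simp
qed

lemma quantile_le_moment:
  assumes Y: "Y \<in> borel_measurable M" "\<And>\<omega>. 0 \<le> Y \<omega>"
    and mom: "integrable M (\<lambda>\<omega>. Y \<omega> powr q)" "(\<integral>\<omega>. Y \<omega> powr q \<partial>M) \<le> C powr q"
    and qC: "0 < q" "0 < C" and p: "0 < p" "p < 1"
  shows "quantile M Y p \<le> (1 - p) powr (-1/q) * C"
proof -
  define t where "t = (1 - p) powr (-1/q) * C"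
  have t: "0 < t" using p qC by (simp add: t_def)
  have "t powr q = ((1 - p) powr (-1/q)) powr q * C powr q"
    using p qC by (simp add: t_def powr_mult)
  also have "((1 - p) powr (-1/q)) powr q = 1 / (1 - p)"
    unfolding powr_powr using p qC by (simp add: powr_minus_divide)
  finally have tq: "t powr q = C powr q / (1 - p)" by simp
  have "{\<omega> \<in> space M. t < Y \<omega>} \<subseteq> {\<omega> \<in> space M. t powr q \<le> Y \<omega> powr q}"
    using t qC by (auto intro: powr_mono2 less_imp_le)
  then have "prob {\<omega> \<in> space M. t < Y \<omega>} \<le> prob {\<omega> \<in> space M. t powr q \<le> Y \<omega> powr q}"
    using Y by (intro finite_measure_mono) measurable
  also have "\<dots> \<le> (\<integral>\<omega>. Y \<omega> powr q \<partial>M) / t powr q"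
    by (rule integral_Markov_inequality_measure[OF mom(1)]) (use t in auto)
  also have "\<dots> \<le> C powr q / t powr q"
    using mom t by (simp add: divide_right_mono)
  also have "\<dots> = 1 - p"
    using tq p qC by simp
  finally have "prob {\<omega> \<in> space M. t < Y \<omega>} \<le> 1 - p" .
  moreover have "{\<omega> \<in> space M. Y \<omega> \<le> t} = space M - {\<omega> \<in> space M. t < Y \<omega>}"
    by auto
  ultimately have "p \<le> prob {\<omega> \<in> space M. Y \<omega> \<le> t}"
    using Y by (simp add: prob_compl)
  then show ?thesis
    using quantile_le_iff[OF _ p] Y by (simp add: t_def)
qed

lemma integral_norm_diff_mean_sq_le:
  fixes V :: "'a \<Rightarrow> 'b::{real_inner, banach, second_countable_topology}"
  assumes V: "integrable M V" and Vc: "integrable M (\<lambda>\<omega>. (norm (V \<omega> - c))\<^sup>2)"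
  shows "(\<integral>\<omega>. (norm (V \<omega> - expectation V))\<^sup>2 \<partial>M) \<le> (\<integral>\<omega>. (norm (V \<omega> - c))\<^sup>2 \<partial>M)"
proof -
  define m where "m = expectation V"
  have "(\<lambda>\<omega>. (norm (V \<omega> - m))\<^sup>2)
          = (\<lambda>\<omega>. (norm (V \<omega> - c))\<^sup>2 - 2 * ((V \<omega> - m) \<bullet> (m - c)) - (norm (m - c))\<^sup>2)"
    by (simp add: power2_norm_eq_inner algebra_simps inner_commute)
  moreover have "(\<integral>\<omega>. (V \<omega> - m) \<bullet> (m - c) \<partial>M) = 0"
    using V by (simp add: m_def prob_space)
  ultimately have "(\<integral>\<omega>. (norm (V \<omega> - m))\<^sup>2 \<partial>M) = (\<integral>\<omega>. (norm (V \<omega> - c))\<^sup>2 \<partial>M) - (norm (m - c))\<^sup>2"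
    using V Vc by (simp add: prob_space)
  then show ?thesis by (simp add: m_def)
qed

lemma clip_mean_bias_le:
  fixes g :: "'b::{banach, second_countable_topology}"
  assumes e: "integrable M e" "expectation e = 0" and \<tau>: "0 \<le> \<tau>"
  shows "norm ((\<integral>\<omega>. clip \<tau> (g + e \<omega>) \<partial>M) - (\<integral>\<omega>. clip_factor \<tau> (g + e \<omega>) \<partial>M) *\<^sub>R g)
           \<le> (\<integral>\<omega>. indicator {\<omega> \<in> space M. \<tau> < norm (g + e \<omega>)} \<omega> * norm (e \<omega>) \<partial>M)"
proof -
  define \<alpha> where "\<alpha> = (\<lambda>\<omega>. clip_factor \<tau> (g + e \<omega>))"
  define S where "S = {\<omega> \<in> space M. \<tau> < norm (g + e \<omega>)}"
  have [measurable]: "e \<in> borel_measurable M" using e by simp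
  have [measurable]: "\<alpha> \<in> borel_measurable M" "S \<in> sets M"
    unfolding \<alpha>_def clip_factor_def S_def by measurable
  have \<alpha>: "0 \<le> \<alpha> \<omega>" "\<alpha> \<omega> \<le> 1" for \<omega>
    using \<tau> by (simp_all add: \<alpha>_def clip_factor_nonneg clip_factor_le_one)
  have \<alpha>_int: "integrable M \<alpha>"
    by (rule integrable_const_bound[where B=1]) (use \<alpha> in auto)
  have \<alpha>e_le: "norm ((\<alpha> \<omega> - 1) *\<^sub>R e \<omega>) \<le> norm (e \<omega>)" for \<omega>
    using \<alpha>[of \<omega>] by (auto intro!: mult_left_le_one_le)
  have \<alpha>e_int: "integrable M (\<lambda>\<omega>. (\<alpha> \<omega> - 1) *\<^sub>R e \<omega>)"
    by (rule Bochner_Integration.integrable_bound[OF integrable_norm[OF e(1)]])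
       (use \<alpha>e_le in auto)
  \<comment> \<open>the noise has mean zero, so only its clipped part contributes\<close>
  have "(\<integral>\<omega>. clip \<tau> (g + e \<omega>) \<partial>M) - (\<integral>\<omega>. \<alpha> \<omega> \<partial>M) *\<^sub>R g
          = (\<integral>\<omega>. \<alpha> \<omega> *\<^sub>R g + (\<alpha> \<omega> - 1) *\<^sub>R e \<omega> + e \<omega> \<partial>M) - (\<integral>\<omega>. \<alpha> \<omega> \<partial>M) *\<^sub>R g"
    by (simp add: clip_def \<alpha>_def algebra_simps)
  also have "\<dots> = (\<integral>\<omega>. (\<alpha> \<omega> - 1) *\<^sub>R e \<omega> \<partial>M)"
    using \<alpha>_int \<alpha>e_int e by simp
  finally have bias: "(\<integral>\<omega>. clip \<tau> (g + e \<omega>) \<partial>M) - (\<integral>\<omega>. \<alpha> \<omega> \<partial>M) *\<^sub>R g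
                        = (\<integral>\<omega>. (\<alpha> \<omega> - 1) *\<^sub>R e \<omega> \<partial>M)" .
  have "norm (\<integral>\<omega>. (\<alpha> \<omega> - 1) *\<^sub>R e \<omega> \<partial>M) \<le> (\<integral>\<omega>. norm ((\<alpha> \<omega> - 1) *\<^sub>R e \<omega>) \<partial>M)"
    by (rule integral_norm_bound)
  also have "\<dots> \<le> (\<integral>\<omega>. indicator S \<omega> * norm (e \<omega>) \<partial>M)"
  proof (rule integral_mono)
    show "integrable M (\<lambda>\<omega>. indicator S \<omega> * norm (e \<omega>))"
      by (rule Bochner_Integration.integrable_bound[OF integrable_norm[OF e(1)]])
         (auto simp: indicator_def)
    fix \<omega> assume "\<omega> \<in> space M"
    then show "norm ((\<alpha> \<omega> - 1) *\<^sub>R e \<omega>) \<le> indicator S \<omega> * norm (e \<omega>)"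
      using \<alpha>[of \<omega>] by (auto simp: S_def \<alpha>_def clip_factor_def indicator_def intro!: mult_left_le_one_le)
  qed (rule integrable_norm[OF \<alpha>e_int])
  finally show ?thesis
    unfolding bias[symmetric] by (simp only: \<alpha>_def S_def)
qed

lemma clip_quantile_mean_bias_le:
  fixes g :: "'b::{banach, second_countable_topology}"
  assumes e: "integrable M e" "expectation e = 0"
    and mom: "integrable M (\<lambda>\<omega>. norm (e \<omega>) powr q)" "(\<integral>\<omega>. norm (e \<omega>) powr q \<partial>M) \<le> C powr q"
    and qC: "1 < q" "0 < C" and p: "0 < p" "p < 1"
  defines "\<tau> \<equiv> quantile M (\<lambda>\<omega>. norm (g + e \<omega>)) p"
  shows "norm ((\<integral>\<omega>. clip \<tau> (g + e \<omega>) \<partial>M) - (\<integral>\<omega>. clip_factor \<tau> (g + e \<omega>) \<partial>M) *\<^sub>R g)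
           \<le> (1 - p) powr (1 - 1/q) * C"
proof -
  have [measurable]: "e \<in> borel_measurable M" using e by simp
  have norm_G: "(\<lambda>\<omega>. norm (g + e \<omega>)) \<in> borel_measurable M" by measurable
  have "norm ((\<integral>\<omega>. clip \<tau> (g + e \<omega>) \<partial>M) - (\<integral>\<omega>. clip_factor \<tau> (g + e \<omega>) \<partial>M) *\<^sub>R g)
          \<le> (\<integral>\<omega>. indicator {\<omega> \<in> space M. \<tau> < norm (g + e \<omega>)} \<omega> * norm (e \<omega>) \<partial>M)"
    using quantile_nonneg[OF norm_G p] by (intro clip_mean_bias_le e) (simp add: \<tau>_def)
  also have "\<dots> \<le> (1 - p) powr (1 - 1/q) * C"
    using prob_quantile_less_le[OF norm_G p] p
    by (intro integral_indicator_mult_le_moment[OF _ norm_ge_zero mom qC]) (simp_all add: \<tau>_def)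
  finally show ?thesis .
qed

lemma clip_variance_le:
  fixes g :: "'b::euclidean_space"
  assumes e_meas[measurable]: "e \<in> borel_measurable M"
    and e_sq: "integrable M (\<lambda>\<omega>. (norm (e \<omega>))\<^sup>2)" and \<tau>: "0 \<le> \<tau>"
  shows "(\<integral>\<omega>. (norm (clip \<tau> (g + e \<omega>) - (\<integral>v. clip \<tau> (g + e v) \<partial>M)))\<^sup>2 \<partial>M)
           \<le> (\<integral>\<omega>. (norm (e \<omega>))\<^sup>2 \<partial>M)"
proof -
  define V where "V = (\<lambda>\<omega>. clip \<tau> (g + e \<omega>))"
  have [measurable]: "V \<in> borel_measurable M"
    unfolding V_def clip_def clip_factor_def by measurable
  have "norm (V \<omega>) \<le> \<tau>" for \<omega>
    using \<tau> by (simp add: V_def norm_clip_le)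
  then have V_int: "integrable M V"
    by (intro integrable_const_bound[where B=\<tau>]) auto
  have le: "(norm (V \<omega> - clip \<tau> g))\<^sup>2 \<le> (norm (e \<omega>))\<^sup>2" for \<omega>
    using norm_clip_diff_le[OF \<tau>, of "g + e \<omega>" g] by (simp add: V_def power_mono)
  have Vc_int: "integrable M (\<lambda>\<omega>. (norm (V \<omega> - clip \<tau> g))\<^sup>2)"
    by (rule Bochner_Integration.integrable_bound[OF e_sq]) (use le in auto)
  have "(\<integral>\<omega>. (norm (V \<omega> - expectation V))\<^sup>2 \<partial>M) \<le> (\<integral>\<omega>. (norm (V \<omega> - clip \<tau> g))\<^sup>2 \<partial>M)"
    by (rule integral_norm_diff_mean_sq_le[OF V_int Vc_int])
  also have "\<dots> \<le> (\<integral>\<omega>. (norm (e \<omega>))\<^sup>2 \<partial>M)"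
    by (rule integral_mono[OF Vc_int e_sq le])
  finally show ?thesis by (simp add: V_def)
qed

end

theorem lemma2:
  fixes M :: "'w measure"
    and L :: "real^'d \<Rightarrow> real" and gradL :: "real^'d \<Rightarrow> real^'d"
    and \<epsilon> :: "real^'d \<Rightarrow> 'w \<Rightarrow> real^'d"
    and \<theta> \<theta>star :: "real^'d"
    and \<delta> q Aq Bq p :: real
  assumes M: "prob_space M"
    and L_diff: "\<And>x. GDERIV L x :> gradL x"
    and minimizer: "\<And>x. L \<theta>star \<le> L x"
    (* (A4) *)
    and eps_meas: "\<And>t. \<epsilon> t \<in> borel_measurable M"
    and eps_mean: "\<And>t. integrable M (\<epsilon> t) \<and> integral\<^sup>L M (\<epsilon> t) = 0"
    and \<delta>: "0 < \<delta>" "\<delta> \<le> 1"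
    and A4_mix: "\<exists>h \<nu>2 \<kappa>.
          (\<forall>R>0. \<kappa> R > (0::real)) \<and>
          (\<forall>t. (\<forall>\<omega>. 0 \<le> h t \<omega>) \<and> h t \<in> borel_measurable lborel
             \<and> prob_space (density lborel (\<lambda>\<omega>. ennreal (h t \<omega>)))
             \<and> (\<forall>R>0. \<kappa> R < (INF \<omega>\<in>cball 0 R. h t \<omega>))
             \<and> prob_space (\<nu>2 t) \<and> sets (\<nu>2 t) = sets borel
             \<and> (\<forall>A \<in> sets borel.
                  measure M {w \<in> space M. \<epsilon> t w \<in> A}
                  = \<delta> * measure (density lborel (\<lambda>\<omega>. ennreal (h t \<omega>))) A
                    + (1 - \<delta>) * measure (\<nu>2 t) A))"
    (* (A5) *)
    and q: "q > 1" and AB: "Aq > 0" "Bq > 0"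
    and A5: "\<And>t. (\<integral>\<^sup>+ w. ennreal (norm (\<epsilon> t w) powr q) \<partial>M)
                   \<le> ennreal ((Aq * norm (t - \<theta>star) + Bq) powr q)"
    and p: "0 < p" "p < 1"
  defines "G \<equiv> (\<lambda>w. gradL \<theta> + \<epsilon> \<theta> w)"
    and "\<tau> \<equiv> quantile M (\<lambda>w. norm (gradL \<theta> + \<epsilon> \<theta> w)) p"
    and "\<alpha> \<equiv> (\<lambda>w. clip_factor (quantile M (\<lambda>w. norm (gradL \<theta> + \<epsilon> \<theta> w)) p) (gradL \<theta> + \<epsilon> \<theta> w))"
    and "C \<equiv> Aq * norm (\<theta> - \<theta>star) + Bq"
  shows "norm ((\<integral>w. \<alpha> w *\<^sub>R G w \<partial>M) - (integral\<^sup>L M \<alpha>) *\<^sub>R gradL \<theta>)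
             \<le> (1 - p) powr (1 - 1 / q) * C
         \<and> \<tau> \<le> norm (gradL \<theta>) + quantile M (\<lambda>w. norm (\<epsilon> \<theta> w)) p
         \<and> norm (gradL \<theta>) + quantile M (\<lambda>w. norm (\<epsilon> \<theta> w)) p
             \<le> norm (gradL \<theta>) + (1 - p) powr (- 1 / q) * C
         \<and> (q \<ge> 2 \<longrightarrow>
             (\<integral>w. (norm (\<alpha> w *\<^sub>R G w - (\<integral>v. \<alpha> v *\<^sub>R G v \<partial>M)))\<^sup>2 \<partial>M)
               \<le> C\<^sup>2 + 5 * (1 - p) * \<tau>\<^sup>2)"
proof -
  \<comment> \<open>only the zero mean of the noise and its moment bound (A5) are used\<close>
  interpret prob_space M by (rule M)
  define g where "g = gradL \<theta>"
  define e where "e = \<epsilon> \<theta>"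
  have e_meas[measurable]: "e \<in> borel_measurable M" using eps_meas by (simp add: e_def)
  have e: "integrable M e" "expectation e = 0" using eps_mean[of \<theta>] by (simp_all add: e_def)
  have C: "0 < C" unfolding C_def using AB by (simp add: add_nonneg_pos)
  have moment_meas: "(\<lambda>w. norm (e w) powr q) \<in> borel_measurable M" by measurable
  have moment_bound: "(\<integral>\<^sup>+w. ennreal (norm (e w) powr q) \<partial>M) \<le> ennreal (C powr q)"
    using A5[of \<theta>] by (simp only: e_def C_def)
  note mom = integrable_integral_le_of_nn_integral_le[OF moment_meas powr_ge_zero moment_bound powr_ge_zero]
  have \<tau>: "\<tau> = quantile M (\<lambda>w. norm (g + e w)) p" by (simp add: \<tau>_def g_def e_def)
  have \<alpha>: "\<alpha> = (\<lambda>w. clip_factor \<tau> (g + e w))" unfolding \<alpha>_def \<tau> g_def e_def ..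
  have clip: "\<alpha> w *\<^sub>R G w = clip \<tau> (g + e w)" for w unfolding \<alpha> G_def clip_def g_def e_def ..
  have "norm ((\<integral>w. \<alpha> w *\<^sub>R G w \<partial>M) - (integral\<^sup>L M \<alpha>) *\<^sub>R g) \<le> (1 - p) powr (1 - 1 / q) * C"
    unfolding clip unfolding \<alpha> \<tau> by (rule clip_quantile_mean_bias_le[OF e mom q C p])
  moreover have "\<tau> \<le> norm g + quantile M (\<lambda>w. norm (e w)) p"
    unfolding \<tau> by (rule quantile_le_add) (auto intro: norm_triangle_ineq p)
  moreover have "quantile M (\<lambda>w. norm (e w)) p \<le> (1 - p) powr (- 1 / q) * C"
    by (rule quantile_le_moment[OF _ norm_ge_zero mom _ C p]) (use q in simp_all)
  moreover have "(\<integral>w. (norm (\<alpha> w *\<^sub>R G w - (\<integral>v. \<alpha> v *\<^sub>R G v \<partial>M)))\<^sup>2 \<partial>M) \<le> C\<^sup>2" if "2 \<le> q"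
  proof -
    have "(\<lambda>w. norm (e w)) \<in> borel_measurable M" by measurable
    note moment2 = integral_power2_le_moment[OF this norm_ge_zero mom that C]
    have "0 \<le> \<tau>" unfolding \<tau> by (rule quantile_nonneg) (use p in simp_all)
    from clip_variance_le[OF e_meas moment2(1) this] moment2(2) show ?thesis
      unfolding clip by (rule order_trans)
  qed
  ultimately show ?thesis
    using p unfolding g_def e_def by (simp add: add_increasing2)
qed

end
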